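(* Let $\alpha=0$ and $\lambda\in\mathbb{N}$. Define functions $g(s;0,\lambda)$ by $g(s;0,0)=0$, $$g(s;0,1)=1-\frac{I_0^2(\sqrt s)}{I_1^2(\sqrt s)},$$ and, for $\lambda\ge1$, the difference equation in $\lambda$ $$\frac{1}{\sqrt{1-g(s;0,\lambda+1)}}+\frac{1}{\sqrt{1-g(s;0,\lambda-1)}}=-\frac{2\lambda\sqrt{1-g(s;0,\lambda)}}{\sqrt s\,g(s;0,\lambda)}.$$ Then for each positive integer $\lambda$, $g(s;0,\lambda)$ is an exact solution of $$\frac{d^2g}{ds^2}=\frac{3g-1}{2g(g-1)}\left(\frac{dg}{ds}\right)^2-\frac1s\frac{dg}{ds}-\frac{\lambda^2(g-1)^2}{2s^2g}+\frac{g}{2s}$$ (i.e. $P_V(0,-\frac{\lambda^2}{2},\frac12,0)$), and $$\mathcal{H}(s;0,\lambda)=\frac{(sg'(s;0,\lambda))^2}{4g(s;0,\lambda)(g(s;0,\lambda)-1)^2}-\frac{\lambda^2}{4g(s;0,\lambda)}+\frac{sg(s;0,\lambda)}{4(g(s;0,\lambda)-1)}$$ is the corresponding solution of $(s\mathcal{H}'')^2=\mathcal{H}'(4\mathcal{H}'-1)(\mathcal{H}-s\mathcal{H}')+\frac1{16}\left[4\lambda\mathcal{H}'-\lambda\right]^2$.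
   Context: $I_k$ denotes the modified Bessel function of the first kind of order $k$. *)

theory Defs
  imports "HOL-Analysis.Analysis"
begin

definition besselI :: "nat \<Rightarrow> real \<Rightarrow> real" where
  "besselI k x = (\<Sum>m. (x / 2) ^ (2 * m + k) / (fact m * fact (m + k)))"

definition hamH :: "(real \<Rightarrow> real) \<Rightarrow> nat \<Rightarrow> real \<Rightarrow> real" where
  "hamH g lam s =
     (s * deriv g s)^2 / (4 * g s * (g s - 1)^2) - (real lam)^2 / (4 * g s)
     + s * g s / (4 * (g s - 1))"

end

theory Submission
  imports Defs
begin

(*
  Put W_k = 1 / sqrt (1 - g(s;0,k)). The difference equation becomes the three-term recurrence
  W_(k+1) + W_(k-1) = 2 k W_k / (sqrt s (1 - W_k^2)), with W_0 = 1 and W_1 = I_1(sqrt s) / I_0(sqrt s).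
  Consecutive members (w, v) = (W_k, W_(k+1)) solve the coupled Riccati system
    w' = k w / (2 s) - (1 - w^2) v / (2 sqrt s),   v' = -(k + 1) v / (2 s) + (1 - v^2) w / (2 sqrt s):
  for k = 0 this is the Riccati equation of the Bessel quotient I_1/I_0, and the recurrence is a
  Baecklund transformation taking a solution for k to one for k + 1. For every solution of the system,
  g = 1 - 1/w^2 solves P_V(0, -k^2/2, 1/2, 0), and the Hamiltonian equals
  H = s (1 - w^2) (1 - v^2) / 4 + k sqrt s w v / 2 with H' = (1 - w^2) / 4, which gives the sigma-form.
*)

definition bessel_coeff :: "nat \<Rightarrow> nat \<Rightarrow> real" where
  "bessel_coeff k m = 1 / (fact m * fact (m + k))"

definition bessel_series :: "nat \<Rightarrow> real \<Rightarrow> real" where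
  "bessel_series k y = (\<Sum>m. bessel_coeff k m * y ^ m)"

lemma summable_bessel_series: "summable (\<lambda>m. bessel_coeff k m * y ^ m)"
proof (rule summable_comparison_test'[OF summable_exp[of "\<bar>y\<bar>"]])
  fix m :: nat
  have "norm (bessel_coeff k m * y ^ m) = \<bar>y\<bar> ^ m / (fact m * fact (m + k))"
    by (simp add: bessel_coeff_def abs_mult power_abs)
  also have "\<dots> \<le> \<bar>y\<bar> ^ m / fact m"
    by (rule divide_left_mono) simp_all
  finally show "norm (bessel_coeff k m * y ^ m) \<le> inverse (fact m) * \<bar>y\<bar> ^ m"
    by (simp add: divide_inverse mult.commute)
qed

lemma diffs_bessel_coeff: "diffs (bessel_coeff k) = bessel_coeff (Suc k)"
proof
  fix n
  have "Suc n + k = Suc (n + k)" by simp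
  then show "diffs (bessel_coeff k) n = bessel_coeff (Suc k) n"
    unfolding diffs_def bessel_coeff_def by (simp only: fact_Suc) (simp add: divide_simps)
qed

lemma bessel_series_has_real_derivative:
  "(bessel_series k has_real_derivative bessel_series (Suc k) y) (at y)"
  unfolding bessel_series_def
  using termdiffs_strong_converges_everywhere[OF summable_bessel_series]
  by (simp add: diffs_bessel_coeff)

lemma bessel_series_recurrence:
  "bessel_series k y = (k + 1) * bessel_series (k + 1) y + y * bessel_series (k + 2) y"
proof -
  define f where "f m = (if m = 0 then 0 else bessel_coeff (k + 2) (m - 1) * y ^ m)" for m
  have "(\<lambda>m. f (Suc m)) sums (y * bessel_series (k + 2) y)"
    unfolding f_def bessel_series_def
    using sums_mult[OF summable_sums[OF summable_bessel_series[of "k + 2" y]], of y]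
    by (simp add: mult_ac)
  then have "f sums (y * bessel_series (k + 2) y)"
    by (subst (asm) sums_Suc_iff) (simp add: f_def)
  then have "(\<lambda>m. (k + 1) * (bessel_coeff (k + 1) m * y ^ m) + f m)
      sums ((k + 1) * bessel_series (k + 1) y + y * bessel_series (k + 2) y)"
    unfolding bessel_series_def
    by (intro sums_add sums_mult summable_sums summable_bessel_series)
  moreover have "(k + 1) * (bessel_coeff (k + 1) m * y ^ m) + f m = bessel_coeff k m * y ^ m" for m
  proof (cases m)
    case (Suc n)
    have "fact (Suc n + (k + 1)) = (real n + k + 2) * (real n + k + 1) * (fact (n + k) :: real)"
      and "fact (n + (k + 2)) = (real n + k + 2) * (real n + k + 1) * (fact (n + k) :: real)"
      and "fact (Suc n + k) = (real n + k + 1) * (fact (n + k) :: real)"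
      by (simp_all add: add_ac)
    then have "(k + 1) * bessel_coeff (k + 1) (Suc n) + bessel_coeff (k + 2) n = bessel_coeff k (Suc n)"
      by (simp add: bessel_coeff_def divide_simps)
    then have "((k + 1) * bessel_coeff (k + 1) m + bessel_coeff (k + 2) n) * y ^ m
        = bessel_coeff k m * y ^ m"
      by (simp add: Suc)
    then show ?thesis
      by (simp add: Suc f_def algebra_simps)
  qed (simp add: f_def bessel_coeff_def)
  ultimately show ?thesis
    unfolding bessel_series_def by (simp add: sums_iff)
qed

lemma bessel_series_pos: "0 \<le> y \<Longrightarrow> 0 < bessel_series k y"
  unfolding bessel_series_def
  by (rule suminf_pos2[OF summable_bessel_series, where i = 0])
     (simp_all add: bessel_coeff_def)

lemma besselI_eq_bessel_series: "besselI k x = (x / 2) ^ k * bessel_series k (x\<^sup>2 / 4)"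
proof -
  have "(x / 2) ^ (2 * m + k) = (x / 2) ^ k * (x\<^sup>2 / 4) ^ m" for m
    by (simp only: power_add power_mult power_divide) (simp add: mult.commute)
  then have "(x / 2) ^ (2 * m + k) / (fact m * fact (m + k))
      = (x / 2) ^ k * (bessel_coeff k m * (x\<^sup>2 / 4) ^ m)" for m
    by (simp add: bessel_coeff_def)
  then show ?thesis
    unfolding besselI_def bessel_series_def
    using suminf_mult[OF summable_bessel_series, of "(x / 2) ^ k"] by simp
qed

lemma besselI_pos: "0 < x \<Longrightarrow> 0 < besselI k x"
  by (simp add: besselI_eq_bessel_series bessel_series_pos)

lemma bessel_series_quarter_square_has_real_derivative:
  "((\<lambda>x. bessel_series k (x\<^sup>2 / 4)) has_real_derivative bessel_series (Suc k) (x\<^sup>2 / 4) * (x / 2)) (at x)"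
proof -
  have "((\<lambda>x. x\<^sup>2 / 4) has_real_derivative x / 2) (at x)"
    by (rule derivative_eq_intros refl | simp)+
  then show ?thesis
    by (rule DERIV_chain'[OF _ bessel_series_has_real_derivative])
qed

lemma besselI0_has_real_derivative: "(besselI 0 has_real_derivative besselI 1 x) (at x)"
  using bessel_series_quarter_square_has_real_derivative[of 0 x]
  by (simp add: besselI_eq_bessel_series[abs_def] mult.commute)

lemma besselI1_has_real_derivative:
  assumes "x \<noteq> 0"
  shows "(besselI 1 has_real_derivative besselI 0 x - besselI 1 x / x) (at x)"
proof -
  have I1: "besselI 1 = (\<lambda>x. x / 2 * bessel_series 1 (x\<^sup>2 / 4))"
    by (simp add: fun_eq_iff besselI_eq_bessel_series)
  have "(besselI 1 has_real_derivative
      bessel_series 1 (x\<^sup>2 / 4) / 2 + x / 2 * (bessel_series 2 (x\<^sup>2 / 4) * (x / 2))) (at x)"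
    unfolding I1 using bessel_series_quarter_square_has_real_derivative[of 1 x]
    by (auto intro!: derivative_eq_intros simp: numeral_2_eq_2)
  moreover have "bessel_series 1 (x\<^sup>2 / 4) / 2 + x / 2 * (bessel_series 2 (x\<^sup>2 / 4) * (x / 2))
      = besselI 0 x - besselI 1 x / x"
    using bessel_series_recurrence[of 0 "x\<^sup>2 / 4"] assms
    by (simp add: besselI_eq_bessel_series field_simps power2_eq_square numeral_2_eq_2)
  ultimately show ?thesis by simp
qed

lemma bessel_ratio_has_real_derivative:
  assumes x: "0 < x"
  defines "r \<equiv> besselI 1 (sqrt x) / besselI 0 (sqrt x)"
  shows "((\<lambda>x. besselI 1 (sqrt x) / besselI 0 (sqrt x)) has_real_derivative
    (1 - r\<^sup>2) / (2 * sqrt x) - r / (2 * x)) (at x)"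
proof -
  define t where "t = sqrt x"
  define p where "p = besselI 0 t"
  define q where "q = besselI 1 t"
  have t: "0 < t" "x = t\<^sup>2" using x by (auto simp: t_def)
  have p0: "p \<noteq> 0" using besselI_pos[of t 0] t(1) by (simp add: p_def)
  have dt: "(sqrt has_real_derivative 1 / (2 * t)) (at x)"
    using DERIV_real_sqrt[OF x] by (simp add: t_def field_simps)
  have "((\<lambda>x. besselI 1 (sqrt x) / besselI 0 (sqrt x)) has_real_derivative
      ((p - q / t) * (1 / (2 * t)) * p - q * (q * (1 / (2 * t)))) / (p * p)) (at x)"
    using DERIV_divide[OF DERIV_chain2[OF besselI1_has_real_derivative dt]
        DERIV_chain2[OF besselI0_has_real_derivative dt]] t(1) p0
    by (simp add: t_def p_def q_def)
  moreover have "((p - q / t) * (1 / (2 * t)) * p - q * (q * (1 / (2 * t)))) / (p * p)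
      = (1 - r\<^sup>2) / (2 * sqrt x) - r / (2 * x)"
    unfolding r_def t_def[symmetric] p_def[symmetric] q_def[symmetric] unfolding t(2)
    using t(1) p0 by (simp add: field_simps power2_eq_square)
  ultimately show ?thesis by simp
qed

lemma inverse_sqrt_one_minus_quotient:
  fixes a m t :: real
  assumes "a < 1" "a \<noteq> 0"
  shows "- (m * sqrt (1 - a)) / (t * a) = m * (1 / sqrt (1 - a)) / (t * (1 - (1 / sqrt (1 - a))\<^sup>2))"
proof -
  define r where "r = sqrt (1 - a)"
  have r: "r > 0" "a = 1 - r\<^sup>2" using assms(1) by (auto simp: r_def)
  have q: "1 - (1 / r)\<^sup>2 = - a / r\<^sup>2"
    unfolding r(2) using r(1) by (simp add: field_simps)
  show ?thesis
    unfolding r_def[symmetric] q using r(1) assms(2)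
    by (cases "t = 0") (simp_all add: field_simps power2_eq_square)
qed

locale coupled_riccati =
  fixes S :: "real set" and n :: nat and w v :: "real \<Rightarrow> real"
  assumes open_S: "open S" and S_pos: "S \<subseteq> {0<..}"
    and w_deriv: "x \<in> S \<Longrightarrow> (w has_real_derivative
      real n * w x / (2 * x) - (1 - (w x)\<^sup>2) * v x / (2 * sqrt x)) (at x)"
    and v_deriv: "x \<in> S \<Longrightarrow> (v has_real_derivative
      - (real n + 1) * v x / (2 * x) + (1 - (v x)\<^sup>2) * w x / (2 * sqrt x)) (at x)"

lemma coupled_riccati_cong:
  assumes "coupled_riccati S n w v" and eq: "\<And>x. x \<in> S \<Longrightarrow> v x = u x"
  shows "coupled_riccati S n w u"
proof -
  interpret coupled_riccati S n w v by fact
  show ?thesis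
  proof
    fix x assume x: "x \<in> S"
    show "(w has_real_derivative real n * w x / (2 * x) - (1 - (w x)\<^sup>2) * u x / (2 * sqrt x)) (at x)"
      using w_deriv[OF x] by (simp add: eq[OF x])
    have "(v has_real_derivative - (real n + 1) * u x / (2 * x) + (1 - (u x)\<^sup>2) * w x / (2 * sqrt x)) (at x)"
      using v_deriv[OF x] by (simp add: eq[OF x])
    then show "(u has_real_derivative - (real n + 1) * u x / (2 * x) + (1 - (u x)\<^sup>2) * w x / (2 * sqrt x)) (at x)"
      by (rule has_field_derivative_transform_within_open[OF _ open_S x]) (rule eq)
  qed (use open_S S_pos in auto)
qed

context coupled_riccati
begin

definition backlund :: "real \<Rightarrow> real" where
  "backlund x = 2 * (real n + 1) * v x / (sqrt x * (1 - (v x)\<^sup>2)) - w x"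

lemma v_has_derivative_backlund:
  assumes x: "x \<in> S" and nondeg: "(v x)\<^sup>2 \<noteq> 1"
  shows "(v has_real_derivative
    real (Suc n) * v x / (2 * x) - (1 - (v x)\<^sup>2) * backlund x / (2 * sqrt x)) (at x)"
proof -
  define t where "t = sqrt x"
  define a where "a = w x"
  define b where "b = v x"
  have t: "t > 0" "x = t\<^sup>2" using x S_pos by (auto simp: t_def)
  have b1: "1 - b\<^sup>2 \<noteq> 0" using nondeg by (simp add: b_def)
  have "- (real n + 1) * b / (2 * x) + (1 - b\<^sup>2) * a / (2 * t)
      = real (Suc n) * b / (2 * x) - (1 - b\<^sup>2) * (2 * (real n + 1) * b / (t * (1 - b\<^sup>2)) - a) / (2 * t)"
    unfolding t(2) using t(1) b1 by (simp add: field_simps) algebra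
  then show ?thesis
    using v_deriv[OF x] by (simp add: backlund_def flip: t_def a_def b_def)
qed

lemma backlund_has_derivative:
  assumes x: "x \<in> S" and nondeg: "(v x)\<^sup>2 \<noteq> 1"
  shows "(backlund has_real_derivative
    - (real (Suc n) + 1) * backlund x / (2 * x) + (1 - (backlund x)\<^sup>2) * v x / (2 * sqrt x)) (at x)"
proof -
  define t where "t = sqrt x"
  define a where "a = w x"
  define b where "b = v x"
  define A where "A = real n * a / (2 * x) - (1 - a\<^sup>2) * b / (2 * t)"
  define B where "B = - (real n + 1) * b / (2 * x) + (1 - b\<^sup>2) * a / (2 * t)"
  have x_pos: "x > 0" using x S_pos by auto
  then have t: "t > 0" "x = t\<^sup>2" by (simp_all add: t_def)
  have b1: "1 - b\<^sup>2 \<noteq> 0" using nondeg by (simp add: b_def)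
  have dw: "(w has_real_derivative A) (at x)"
    using w_deriv[OF x] by (simp add: A_def t_def a_def b_def)
  have dv: "(v has_real_derivative B) (at x)"
    using v_deriv[OF x] by (simp add: B_def t_def a_def b_def)
  have dt: "(sqrt has_real_derivative 1 / (2 * t)) (at x)"
    using DERIV_real_sqrt[OF x_pos] by (simp add: t_def field_simps)
  have dq: "((\<lambda>y. sqrt y * (1 - (v y)\<^sup>2)) has_real_derivative (1 - b\<^sup>2) / (2 * t) - 2 * t * b * B) (at x)"
    using DERIV_mult[OF dt DERIV_diff[OF DERIV_const[of 1] DERIV_power[OF dv, of 2]]]
    by (rule DERIV_cong) (simp add: t_def b_def algebra_simps diff_divide_distrib)
  have q0: "sqrt x * (1 - (v x)\<^sup>2) \<noteq> 0"
    using x_pos b1 by (simp add: b_def)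
  have "(backlund has_real_derivative
      (2 * (real n + 1) * B * (t * (1 - b\<^sup>2)) - 2 * (real n + 1) * b * ((1 - b\<^sup>2) / (2 * t) - 2 * t * b * B))
        / (t * (1 - b\<^sup>2) * (t * (1 - b\<^sup>2))) - A) (at x)"
    unfolding backlund_def[abs_def]
    using DERIV_diff[OF DERIV_divide[OF DERIV_cmult[OF dv, of "2 * (real n + 1)"] dq q0] dw]
    by (simp add: t_def b_def)
  moreover have "backlund x = 2 * (real n + 1) * b / (t * (1 - b\<^sup>2)) - a"
    by (simp add: backlund_def t_def a_def b_def)
  moreover have "(2 * (real n + 1) * B * (t * (1 - b\<^sup>2)) - 2 * (real n + 1) * b * ((1 - b\<^sup>2) / (2 * t) - 2 * t * b * B))
        / (t * (1 - b\<^sup>2) * (t * (1 - b\<^sup>2))) - A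
      = - (real (Suc n) + 1) * (2 * (real n + 1) * b / (t * (1 - b\<^sup>2)) - a) / (2 * x)
        + (1 - (2 * (real n + 1) * b / (t * (1 - b\<^sup>2)) - a)\<^sup>2) * b / (2 * t)"
  proof -
    define q where "q = 1 - b\<^sup>2"
    have "q \<noteq> 0" using b1 by (simp add: q_def)
    then show ?thesis
      unfolding A_def B_def q_def[symmetric] unfolding t(2) using t(1)
      by (simp add: field_simps) (unfold q_def, algebra)
  qed
  ultimately show ?thesis
    by (simp flip: t_def b_def)
qed

lemma backlund_coupled_riccati:
  assumes "\<And>x. x \<in> S \<Longrightarrow> (v x)\<^sup>2 \<noteq> 1"
  shows "coupled_riccati S (Suc n) v backlund"
  using open_S S_pos v_has_derivative_backlund backlund_has_derivative assms
  by unfold_locales auto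

end

lemma coupled_riccati_chain:
  fixes W :: "nat \<Rightarrow> real \<Rightarrow> real"
  assumes S: "open S" "S \<subseteq> {0<..}"
    and W0: "\<And>x. x \<in> S \<Longrightarrow> W 0 x = 1"
    and W1: "\<And>x. x \<in> S \<Longrightarrow>
      (W 1 has_real_derivative (1 - (W 1 x)\<^sup>2) / (2 * sqrt x) - W 1 x / (2 * x)) (at x)"
    and nondeg: "\<And>k x. x \<in> S \<Longrightarrow> 1 \<le> k \<Longrightarrow> (W k x)\<^sup>2 \<noteq> 1"
    and rec: "\<And>k x. x \<in> S \<Longrightarrow> 1 \<le> k \<Longrightarrow>
      W (Suc k) x = 2 * real k * W k x / (sqrt x * (1 - (W k x)\<^sup>2)) - W (k - 1) x"
  shows "coupled_riccati S n (W n) (W (Suc n))"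
proof (induction n)
  case 0
  show ?case
  proof
    fix x assume x: "x \<in> S"
    have "(W 0 has_real_derivative 0) (at x)"
      by (rule has_field_derivative_transform_within_open[OF DERIV_const S(1) x]) (simp add: W0)
    then show "(W 0 has_real_derivative
        real 0 * W 0 x / (2 * x) - (1 - (W 0 x)\<^sup>2) * W (Suc 0) x / (2 * sqrt x)) (at x)"
      using W0[OF x] by simp
    show "(W (Suc 0) has_real_derivative
        - (real 0 + 1) * W (Suc 0) x / (2 * x) + (1 - (W (Suc 0) x)\<^sup>2) * W 0 x / (2 * sqrt x)) (at x)"
      using W1[OF x] W0[OF x] by simp
  qed (use S in auto)
next
  case (Suc n)
  then interpret coupled_riccati S n "W n" "W (Suc n)" .
  have "coupled_riccati S (Suc n) (W (Suc n)) backlund"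
    by (rule backlund_coupled_riccati) (simp add: nondeg)
  then show ?case
    by (rule coupled_riccati_cong) (simp add: backlund_def rec)
qed

locale coupled_riccati_pV = coupled_riccati +
  fixes g :: "real \<Rightarrow> real"
  assumes w_nonzero: "x \<in> S \<Longrightarrow> w x \<noteq> 0"
    and w_sq_ne_1: "x \<in> S \<Longrightarrow> (w x)\<^sup>2 \<noteq> 1"
    and g_eq: "x \<in> S \<Longrightarrow> g x = 1 - 1 / (w x)\<^sup>2"
begin

lemma g_has_derivative:
  assumes x: "x \<in> S"
  shows "(g has_real_derivative
    2 * (real n * w x / (2 * x) - (1 - (w x)\<^sup>2) * v x / (2 * sqrt x)) / (w x) ^ 3) (at x)"
proof -
  have w2: "(w x)\<^sup>2 \<noteq> 0" using w_nonzero[OF x] by simp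
  have "((\<lambda>y. 1 - 1 / (w y)\<^sup>2) has_real_derivative
      2 * (real n * w x / (2 * x) - (1 - (w x)\<^sup>2) * v x / (2 * sqrt x)) / (w x) ^ 3) (at x)"
    using DERIV_diff[OF DERIV_const[of 1] DERIV_divide[OF DERIV_const[of 1] DERIV_power[OF w_deriv[OF x], of 2] w2]]
    by (rule DERIV_cong) (use w2 in \<open>simp add: field_simps power2_eq_square power3_eq_cube\<close>)
  then show ?thesis
    by (rule has_field_derivative_transform_within_open[OF _ open_S x]) (simp add: g_eq)
qed

lemma deriv_g:
  "x \<in> S \<Longrightarrow> deriv g x = 2 * (real n * w x / (2 * x) - (1 - (w x)\<^sup>2) * v x / (2 * sqrt x)) / (w x) ^ 3"
  using g_has_derivative by (rule DERIV_imp_deriv)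

lemma deriv_g_has_derivative:
  assumes x: "x \<in> S"
  defines "(A :: real) \<equiv> real n * w x / (2 * x) - (1 - (w x)\<^sup>2) * v x / (2 * sqrt x)"
    and "(B :: real) \<equiv> - (real n + 1) * v x / (2 * x) + (1 - (v x)\<^sup>2) * w x / (2 * sqrt x)"
  defines "(A' :: real) \<equiv> real n * A / (2 * x) - real n * w x / (2 * x\<^sup>2) + w x * A * v x / sqrt x
      - (1 - (w x)\<^sup>2) * B / (2 * sqrt x) + (1 - (w x)\<^sup>2) * v x / (4 * x * sqrt x)"
  shows "(deriv g has_real_derivative 2 * A' / (w x) ^ 3 - 6 * A\<^sup>2 / (w x) ^ 4) (at x)"
proof -
  have x_pos: "x > 0" using x S_pos by auto
  have dw: "(w has_real_derivative A) (at x)" using w_deriv[OF x] by (simp add: A_def)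
  have dv: "(v has_real_derivative B) (at x)" using v_deriv[OF x] by (simp add: B_def)
  have dt: "(sqrt has_real_derivative 1 / (2 * sqrt x)) (at x)"
    using DERIV_real_sqrt[OF x_pos] by (simp add: field_simps)
  have x_ne: "x \<noteq> 0" "sqrt x \<noteq> 0" using x_pos by simp_all
  have sqrt_sqrt: "sqrt x * (sqrt x * y) = x * y" for y
    using x_pos by (simp flip: mult.assoc)
  have x2: "2 * x \<noteq> 0" and t2: "2 * sqrt x \<noteq> 0" using x_pos by auto
  have dA: "((\<lambda>y. real n * w y / (2 * y) - (1 - (w y)\<^sup>2) * v y / (2 * sqrt y)) has_real_derivative A') (at x)"
    using DERIV_diff[OF DERIV_divide[OF DERIV_cmult[OF dw, of "real n"] DERIV_cmult[OF DERIV_ident, of 2] x2]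
        DERIV_divide[OF DERIV_mult[OF DERIV_diff[OF DERIV_const[of 1] DERIV_power[OF dw, of 2]] dv]
          DERIV_cmult[OF dt, of 2] t2]]
    by (rule DERIV_cong) (simp add: A'_def field_simps power2_eq_square x_ne, simp add: sqrt_sqrt)
  have w3: "(w x) ^ 3 \<noteq> 0" using w_nonzero[OF x] by simp
  have "((\<lambda>y. 2 * (real n * w y / (2 * y) - (1 - (w y)\<^sup>2) * v y / (2 * sqrt y)) / (w y) ^ 3)
      has_real_derivative 2 * A' / (w x) ^ 3 - 6 * A\<^sup>2 / (w x) ^ 4) (at x)"
    using DERIV_divide[OF DERIV_cmult[OF dA, of 2] DERIV_power[OF dw, of 3] w3]
    by (rule DERIV_cong) (unfold A_def[symmetric], use w3 in \<open>simp add: field_simps power2_eq_square power3_eq_cube power4_eq_xxxx\<close>)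
  then show ?thesis
    by (rule has_field_derivative_transform_within_open[OF _ open_S x]) (simp add: deriv_g)
qed

lemma painleve_V:
  assumes s: "s \<in> S"
  shows "g differentiable (at s) \<and> deriv g differentiable (at s) \<and>
    deriv (deriv g) s =
      (3 * g s - 1) / (2 * g s * (g s - 1)) * (deriv g s)\<^sup>2 - deriv g s / s
      - (real n)\<^sup>2 * (g s - 1)\<^sup>2 / (2 * s\<^sup>2 * g s) + g s / (2 * s)"
proof -
  define t where "t = sqrt s"
  define a where "a = w s"
  define b where "b = v s"
  define q where "q = 1 - a\<^sup>2"
  define A where "A = real n * a / (2 * s) - q * b / (2 * t)"
  define B where "B = - (real n + 1) * b / (2 * s) + (1 - b\<^sup>2) * a / (2 * t)"
  define A' where "A' = real n * A / (2 * s) - real n * a / (2 * s\<^sup>2) + a * A * b / t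
      - q * B / (2 * t) + q * b / (4 * s * t)"
  have t: "t > 0" "s = t\<^sup>2" using s S_pos by (auto simp: t_def)
  have a0: "a \<noteq> 0" and q0: "q \<noteq> 0"
    using w_nonzero[OF s] w_sq_ne_1[OF s] by (auto simp: a_def q_def)
  have dg: "(deriv g has_real_derivative 2 * A' / a ^ 3 - 6 * A\<^sup>2 / a ^ 4) (at s)"
    using deriv_g_has_derivative[OF s] unfolding A'_def A_def B_def q_def t_def a_def b_def .
  have g1: "g s - 1 = - 1 / a\<^sup>2" and g0: "g s = - q / a\<^sup>2"
    using g_eq[OF s] a0 by (simp_all add: a_def q_def field_simps)
  have "deriv (deriv g) s =
      (3 * g s - 1) / (2 * g s * (g s - 1)) * (deriv g s)\<^sup>2 - deriv g s / s
      - (real n)\<^sup>2 * (g s - 1)\<^sup>2 / (2 * s\<^sup>2 * g s) + g s / (2 * s)"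
    unfolding DERIV_imp_deriv[OF dg] deriv_g[OF s] g1 unfolding g0
    unfolding A'_def B_def A_def a_def[symmetric] b_def[symmetric] q_def[symmetric] t_def[symmetric]
    unfolding t(2) using t(1) a0 q0 by (simp add: field_simps) (unfold q_def, algebra)
  moreover have "g differentiable (at s)" "deriv g differentiable (at s)"
    using g_has_derivative[OF s] dg by (auto simp: real_differentiable_def)
  ultimately show ?thesis by blast
qed

lemma hamH_eq:
  assumes x: "x \<in> S"
  shows "hamH g n x = x * (1 - (w x)\<^sup>2) * (1 - (v x)\<^sup>2) / 4 + real n * sqrt x * w x * v x / 2"
proof -
  define t where "t = sqrt x"
  define a where "a = w x"
  define b where "b = v x"
  define q where "q = 1 - a\<^sup>2"
  have t: "t > 0" "x = t\<^sup>2" using x S_pos by (auto simp: t_def)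
  have a0: "a \<noteq> 0" and q0: "q \<noteq> 0"
    using w_nonzero[OF x] w_sq_ne_1[OF x] by (auto simp: a_def q_def)
  have g1: "g x - 1 = - 1 / a\<^sup>2" and g0: "g x = - q / a\<^sup>2"
    using g_eq[OF x] a0 by (simp_all add: a_def q_def field_simps)
  show ?thesis
    unfolding hamH_def deriv_g[OF x] g1 unfolding g0
    unfolding a_def[symmetric] b_def[symmetric] q_def[symmetric] t_def[symmetric]
    unfolding t(2) using t(1) a0 q0 by (simp add: field_simps) (unfold q_def, algebra)
qed

lemma hamH_has_derivative:
  assumes x: "x \<in> S"
  shows "(hamH g n has_real_derivative (1 - (w x)\<^sup>2) / 4) (at x)"
proof -
  define A where "A = real n * w x / (2 * x) - (1 - (w x)\<^sup>2) * v x / (2 * sqrt x)"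
  define B where "B = - (real n + 1) * v x / (2 * x) + (1 - (v x)\<^sup>2) * w x / (2 * sqrt x)"
  have x_pos: "x > 0" using x S_pos by auto
  have dw: "(w has_real_derivative A) (at x)" using w_deriv[OF x] by (simp add: A_def)
  have dv: "(v has_real_derivative B) (at x)" using v_deriv[OF x] by (simp add: B_def)
  have dt: "(sqrt has_real_derivative 1 / (2 * sqrt x)) (at x)"
    using DERIV_real_sqrt[OF x_pos] by (simp add: field_simps)
  have d1w: "((\<lambda>y. 1 - (w y)\<^sup>2) has_real_derivative - 2 * w x * A) (at x)"
    using DERIV_diff[OF DERIV_const[of 1] DERIV_power[OF dw, of 2]] by (rule DERIV_cong) simp
  have d1v: "((\<lambda>y. 1 - (v y)\<^sup>2) has_real_derivative - 2 * v x * B) (at x)"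
    using DERIV_diff[OF DERIV_const[of 1] DERIV_power[OF dv, of 2]] by (rule DERIV_cong) simp
  have "((\<lambda>y. y * (1 - (w y)\<^sup>2) * (1 - (v y)\<^sup>2) / 4 + real n * sqrt y * w y * v y / 2)
      has_real_derivative (1 - (w x)\<^sup>2) / 4) (at x)"
  proof (rule DERIV_cong)
    show "((\<lambda>y. y * (1 - (w y)\<^sup>2) * (1 - (v y)\<^sup>2) / 4 + real n * sqrt y * w y * v y / 2)
      has_real_derivative
        ((1 - (w x)\<^sup>2) * (1 - (v x)\<^sup>2) - 2 * x * w x * A * (1 - (v x)\<^sup>2) - 2 * x * (1 - (w x)\<^sup>2) * v x * B) / 4
        + real n * (w x * v x / (2 * sqrt x) + sqrt x * (A * v x + w x * B)) / 2) (at x)"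
      using DERIV_add[OF DERIV_cdivide[OF DERIV_mult[OF DERIV_mult[OF DERIV_ident d1w] d1v], of 4]
          DERIV_cdivide[OF DERIV_mult[OF DERIV_mult[OF DERIV_cmult[OF dt, of "real n"] dw] dv], of 2]]
      by (rule DERIV_cong) (simp add: algebra_simps)
    define t where "t = sqrt x"
    define a where "a = w x"
    define b where "b = v x"
    have t: "t > 0" "x = t\<^sup>2" using x_pos by (auto simp: t_def)
    show "((1 - (w x)\<^sup>2) * (1 - (v x)\<^sup>2) - 2 * x * w x * A * (1 - (v x)\<^sup>2) - 2 * x * (1 - (w x)\<^sup>2) * v x * B) / 4
        + real n * (w x * v x / (2 * sqrt x) + sqrt x * (A * v x + w x * B)) / 2 = (1 - (w x)\<^sup>2) / 4"
      unfolding A_def B_def a_def[symmetric] b_def[symmetric] t_def[symmetric] unfolding t(2)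
      using t(1) by (simp add: field_simps) algebra
  qed
  then show ?thesis
    by (rule has_field_derivative_transform_within_open[OF _ open_S x]) (simp add: hamH_eq)
qed

lemma deriv_hamH: "x \<in> S \<Longrightarrow> deriv (hamH g n) x = (1 - (w x)\<^sup>2) / 4"
  using hamH_has_derivative by (rule DERIV_imp_deriv)

lemma deriv_hamH_has_derivative:
  assumes x: "x \<in> S"
  shows "(deriv (hamH g n) has_real_derivative
    - w x * (real n * w x / (2 * x) - (1 - (w x)\<^sup>2) * v x / (2 * sqrt x)) / 2) (at x)"
proof -
  have "((\<lambda>y. (1 - (w y)\<^sup>2) / 4) has_real_derivative
      - w x * (real n * w x / (2 * x) - (1 - (w x)\<^sup>2) * v x / (2 * sqrt x)) / 2) (at x)"
    using DERIV_cdivide[OF DERIV_diff[OF DERIV_const[of 1] DERIV_power[OF w_deriv[OF x], of 2]], of 4]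
    by (rule DERIV_cong) simp
  then show ?thesis
    by (rule has_field_derivative_transform_within_open[OF _ open_S x]) (simp add: deriv_hamH)
qed

lemma sigma_painleve_V:
  assumes s: "s \<in> S"
  shows "hamH g n differentiable (at s) \<and> deriv (hamH g n) differentiable (at s) \<and>
    (s * deriv (deriv (hamH g n)) s)\<^sup>2 =
      deriv (hamH g n) s * (4 * deriv (hamH g n) s - 1) * (hamH g n s - s * deriv (hamH g n) s)
      + 1/16 * (4 * real n * deriv (hamH g n) s - real n)\<^sup>2"
proof -
  define t where "t = sqrt s"
  define a where "a = w s"
  define b where "b = v s"
  have t: "t > 0" "s = t\<^sup>2" using s S_pos by (auto simp: t_def)
  have "(s * deriv (deriv (hamH g n)) s)\<^sup>2 =
      deriv (hamH g n) s * (4 * deriv (hamH g n) s - 1) * (hamH g n s - s * deriv (hamH g n) s)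
      + 1/16 * (4 * real n * deriv (hamH g n) s - real n)\<^sup>2"
    unfolding DERIV_imp_deriv[OF deriv_hamH_has_derivative[OF s]] deriv_hamH[OF s] hamH_eq[OF s]
    unfolding a_def[symmetric] b_def[symmetric] t_def[symmetric] unfolding t(2)
    using t(1) by (simp add: field_simps) algebra
  moreover have "hamH g n differentiable (at s)" "deriv (hamH g n) differentiable (at s)"
    using hamH_has_derivative[OF s] deriv_hamH_has_derivative[OF s]
    by (auto simp: real_differentiable_def)
  ultimately show ?thesis by blast
qed

end
theorem theorem9:
  fixes g :: "nat \<Rightarrow> real \<Rightarrow> real" and S :: "real set"
  assumes S_open: "open S" and S_pos: "S \<subseteq> {0<..}"
    and g0: "\<And>s. s \<in> S \<Longrightarrow> g 0 s = 0"
    and g1: "\<And>s. s \<in> S \<Longrightarrow> g 1 s = 1 - (besselI 0 (sqrt s))^2 / (besselI 1 (sqrt s))^2"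
    and wd: "\<And>lam s. s \<in> S \<Longrightarrow> lam \<ge> 1 \<Longrightarrow> g lam s \<noteq> 0 \<and> g lam s < 1"
    and rec: "\<And>lam s. s \<in> S \<Longrightarrow> lam \<ge> 1 \<Longrightarrow>
        1 / sqrt (1 - g (lam + 1) s) + 1 / sqrt (1 - g (lam - 1) s)
          = - (2 * real lam * sqrt (1 - g lam s)) / (sqrt s * g lam s)"
    and lam_pos: "lam \<ge> 1" and s_in: "s \<in> S"
  shows "g lam differentiable (at s) \<and> deriv (g lam) differentiable (at s) \<and>
         deriv (deriv (g lam)) s =
           (3 * g lam s - 1) / (2 * g lam s * (g lam s - 1)) * (deriv (g lam) s)^2
           - deriv (g lam) s / s
           - (real lam)^2 * (g lam s - 1)^2 / (2 * s^2 * g lam s)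
           + g lam s / (2 * s)
       \<and> hamH (g lam) lam differentiable (at s)
       \<and> deriv (hamH (g lam) lam) differentiable (at s)
       \<and> (s * deriv (deriv (hamH (g lam) lam)) s)^2 =
           deriv (hamH (g lam) lam) s * (4 * deriv (hamH (g lam) lam) s - 1)
             * (hamH (g lam) lam s - s * deriv (hamH (g lam) lam) s)
           + 1/16 * (4 * real lam * deriv (hamH (g lam) lam) s - real lam)^2"
proof -
  define W where "W k x = 1 / sqrt (1 - g k x)" for k x
  have g_lt_1: "g k x < 1" if "x \<in> S" for k x
    using that g0 wd by (cases k) auto
  have g_eq: "g k x = 1 - 1 / (W k x)\<^sup>2" if "x \<in> S" for k x
    using g_lt_1[OF that, of k] by (simp add: W_def power_divide)
  have W_nonzero: "W k x \<noteq> 0" if "x \<in> S" for k x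
    using g_lt_1[OF that, of k] by (simp add: W_def)
  have W_nondeg: "(W k x)\<^sup>2 \<noteq> 1" if "x \<in> S" "1 \<le> k" for k x
    using g_eq[OF that(1), of k] wd[OF that] by auto
  have W1: "W 1 x = besselI 1 (sqrt x) / besselI 0 (sqrt x)" if "x \<in> S" for x
    using g1[OF that] besselI_pos[of "sqrt x" 0] besselI_pos[of "sqrt x" 1] that S_pos
    by (auto simp: W_def real_sqrt_divide)
  have "coupled_riccati S n (W n) (W (Suc n))" for n
  proof (rule coupled_riccati_chain[OF S_open S_pos])
    fix x and k :: nat assume x: "x \<in> S"
    show "W 0 x = 1" using g0[OF x] by (simp add: W_def)
    show "(W 1 has_real_derivative (1 - (W 1 x)\<^sup>2) / (2 * sqrt x) - W 1 x / (2 * x)) (at x)"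
      unfolding W1[OF x] using x S_pos
      by (intro has_field_derivative_transform_within_open[OF bessel_ratio_has_real_derivative S_open x])
         (auto simp: W1[unfolded One_nat_def])
    assume k: "1 \<le> k"
    show "(W k x)\<^sup>2 \<noteq> 1" using W_nondeg[OF x k] .
    show "W (Suc k) x = 2 * real k * W k x / (sqrt x * (1 - (W k x)\<^sup>2)) - W (k - 1) x"
      using rec[OF x k] inverse_sqrt_one_minus_quotient[of "g k x" "2 * real k" "sqrt x"] wd[OF x k]
      by (simp add: W_def)
  qed
  then interpret coupled_riccati_pV S lam "W lam" "W (Suc lam)" "g lam"
    using W_nonzero W_nondeg[OF _ lam_pos] g_eq
    by (intro coupled_riccati_pV.intro coupled_riccati_pV_axioms.intro) auto
  show ?thesis
    using painleve_V[OF s_in] sigma_painleve_V[OF s_in] by blast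
qed

end
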